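(* Let $L>0$ and let $\alpha,\beta:\mathbb{R}\to\mathbb{R}^2$ be smooth $L$-periodic maps with $\alpha'$ nowhere zero, $\langle\beta,\alpha'\rangle = 0$ and $|\alpha'|^2+|\beta|^2=1$. Let $\gamma(t,s) = \tfrac12(\alpha(s+t)+\alpha(s-t)) + \tfrac12\int_{s-t}^{s+t}\beta(\xi)\,d\xi$, $a=\alpha'+\beta$, $b=\alpha'-\beta$, and let $\psi,\tilde\psi:\mathbb{R}\to\mathbb{R}$ be smooth functions with $a = (\cos\psi,\sin\psi)$ and $b = -(\cos\tilde\psi,\sin\tilde\psi)$. Assume that $\alpha$ has non-zero rotation index and that the curvature $\kappa$ of the curves $s\mapsto \gamma(t,s)$ is always finite (so that in particular, for every $t$, the unit tangent map $s\mapsto \gamma_{,s}(t,s)/|\gamma_{,s}(t,s)|$ extends continuously to all of $\mathbb{R}$). Then $\psi$ and $\tilde\psi$ are either both non-increasing or both non-decreasing.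
   Context: The rotation index of $\alpha$ is the degree of $\alpha'/|\alpha'|$ as a map from $\mathbb{R}/L\mathbb{Z}$ to the unit circle. Note $2\gamma_{,s}(t,s)=a(s+t)+b(s-t)$. *)

theory Defs
  imports "HOL-Analysis.Analysis"
begin

definition smooth_fun :: "(real \<Rightarrow> 'a::real_normed_vector) \<Rightarrow> bool" where
  "smooth_fun f \<longleftrightarrow> (\<exists>D :: nat \<Rightarrow> real \<Rightarrow> 'a. D 0 = f \<and>
      (\<forall>n x. (D n has_vector_derivative D (Suc n) x) (at x)))"

definition periodic_with :: "real \<Rightarrow> (real \<Rightarrow> 'a) \<Rightarrow> bool" where
  "periodic_with L f \<longleftrightarrow> (\<forall>x. f (x + L) = f x)"

definition unit_vec :: "real \<Rightarrow> real^2" where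
  "unit_vec \<theta> = vector [cos \<theta>, sin \<theta>]"

definition det2 :: "real^2 \<Rightarrow> real^2 \<Rightarrow> real" where
  "det2 u v = u$1 * v$2 - u$2 * v$1"

definition oint :: "real \<Rightarrow> real \<Rightarrow> (real \<Rightarrow> real^2) \<Rightarrow> real^2" where
  "oint a b f = (if a \<le> b then integral {a..b} f else - integral {b..a} f)"

text \<open>Rotation index of an L-periodic curve with nowhere vanishing derivative:
  the degree of the unit tangent map, viewed as a map from R/LZ to the circle,
  computed via a continuous angle lift.\<close>
definition rotation_index :: "real \<Rightarrow> (real \<Rightarrow> real^2) \<Rightarrow> int" where
  "rotation_index L \<alpha> = (THE k::int. \<exists>\<theta>::real \<Rightarrow> real. continuous_on UNIV \<theta> \<and>
      (\<forall>x. (1 / norm (vector_derivative \<alpha> (at x))) *\<^sub>R vector_derivative \<alpha> (at x)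
             = unit_vec (\<theta> x)) \<and>
      \<theta> L - \<theta> 0 = 2 * pi * of_int k)"

definition curvature :: "(real \<Rightarrow> real^2) \<Rightarrow> real \<Rightarrow> real" where
  "curvature c s = det2 (vector_derivative c (at s))
                        (vector_derivative (\<lambda>r. vector_derivative c (at r)) (at s))
                   / norm (vector_derivative c (at s)) ^ 3"

end

theory Submission
  imports Defs
begin

text \<open>
  With \<open>e \<theta> = (cos \<theta>, sin \<theta>)\<close> the hypotheses say \<open>\<alpha>' + \<beta> = e \<psi>\<close> and \<open>\<alpha>' - \<beta> = - e \<psi>tilde\<close>, so
  \<open>\<gamma>\<^sub>s(t, s) = h s \<cdot> n s\<close> with \<open>h s = sin ((\<psi> (s + t) - \<psi>tilde (s - t)) / 2)\<close> and the continuous unit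
  vector \<open>n s = e ((\<psi> (s + t) + \<psi>tilde (s - t)) / 2 + \<pi> / 2)\<close>. If \<open>\<psi> u \<equiv> \<psi>tilde v\<close> modulo \<open>2\<pi>\<close>
  but \<open>\<psi>' u \<noteq> \<psi>tilde' v\<close>, then for \<open>t = (u - v) / 2\<close> the factor \<open>h\<close> has a simple zero at
  \<open>s = (u + v) / 2\<close>, where the unit tangent jumps from \<open>n\<close> to \<open>- n\<close>. So continuity of the unit
  tangent forces \<open>\<psi>' u = \<psi>tilde' v\<close> whenever \<open>\<psi> u \<equiv> \<psi>tilde v\<close>.

  For \<open>t = 0\<close> the same formula gives \<open>\<alpha>' = sin ((\<psi> - \<psi>tilde) / 2) \<cdot> n\<close>; as \<open>\<alpha>'\<close> never vanishes,
  \<open>(\<psi> - \<psi>tilde) / 2\<close> stays between two consecutive multiples of \<open>\<pi>\<close>, hence \<open>\<psi>\<close> and \<open>\<psi>tilde\<close>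
  wind by the same \<open>2\<pi> k\<close> over a period, \<open>k\<close> being the rotation index of \<open>\<alpha>\<close>. Since \<open>k \<noteq> 0\<close>,
  \<open>\<psi>tilde\<close> meets every class of values of \<open>\<psi>\<close> modulo \<open>2\<pi>\<close>, so \<open>\<psi>'\<close> is a function of \<open>\<psi>\<close>.
  Such a derivative cannot change sign, and \<open>\<psi>tilde'\<close> only takes values of \<open>\<psi>'\<close>.
\<close>

lemma continuous_on_UNIV_Icc_subset_range:
  fixes f :: "real \<Rightarrow> real"
  assumes "continuous_on UNIV f"
  shows "{f a..f b} \<subseteq> range f"
  using connected_contains_Icc[OF connected_continuous_image[OF assms connected_UNIV]] by blast

lemma continuous_on_UNIV_nonzero_sign:
  fixes f :: "real \<Rightarrow> real"
  assumes "continuous_on UNIV f" and "\<And>x. f x \<noteq> 0"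
  shows "(\<forall>x. 0 < f x) \<or> (\<forall>x. f x < 0)"
proof (rule ccontr)
  assume "\<not> ?thesis"
  then obtain a b where "f a \<le> 0" "0 \<le> f b" by (auto simp: not_less)
  then have "0 \<in> range f" using continuous_on_UNIV_Icc_subset_range[OF assms(1), of a b] by auto
  then show False using assms(2) by auto
qed

lemma continuous_on_UNIV_Ints_constant:
  fixes g :: "real \<Rightarrow> real"
  assumes "continuous_on UNIV g" and "\<And>x. g x \<in> \<int>"
  shows "g x = g y"
proof -
  have "g constant_on UNIV"
  proof (rule continuous_discrete_range_constant[OF connected_UNIV assms(1)])
    fix x
    have "1 \<le> norm (g y - g x)" if "g y \<noteq> g x" for y
      using assms(2)[of x] assms(2)[of y] that by (auto elim!: Ints_cases)
    then show "\<exists>e>0. \<forall>y. y \<in> UNIV \<and> g y \<noteq> g x \<longrightarrow> e \<le> norm (g y - g x)"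
      by (intro exI[of _ 1]) auto
  qed
  then show ?thesis by (auto simp: constant_on_def)
qed

lemma continuous_on_UNIV_sin_nonzero_oscillation:
  fixes d :: "real \<Rightarrow> real"
  assumes "continuous_on UNIV d" and "\<And>x. sin (d x) \<noteq> 0"
  shows "\<bar>d x - d y\<bar> < pi"
proof -
  have "d b < d a + pi" if "d a \<le> d b" for a b
  proof (rule ccontr)
    assume "\<not> d b < d a + pi"
    define k where "k = \<lceil>d a / pi\<rceil>"
    have "d a / pi \<le> k" "k < d a / pi + 1" using ceiling_correct[of "d a / pi"] by (simp_all add: k_def)
    then have "d a \<le> k * pi" "k * pi < d a + pi" by (simp_all add: field_simps)
    then have "k * pi \<in> range d"
      using continuous_on_UNIV_Icc_subset_range[OF assms(1), of a b] \<open>\<not> d b < d a + pi\<close> by auto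
    then obtain z where "d z = k * pi" by (metis rangeE)
    then show False using assms(2)[of z] sin_zero_iff_int2 by metis
  qed
  from this[of x y] this[of y x] show ?thesis by linarith
qed

lemma continuous_on_UNIV_meets_every_class_mod_2pi:
  fixes f :: "real \<Rightarrow> real"
  assumes "continuous_on UNIV f" and "2 * pi \<le> \<bar>f b - f a\<bar>"
  obtains u and k :: int where "f u = y + 2 * pi * k"
proof -
  obtain p q where pq: "2 * pi \<le> f q - f p"
    using assms(2) by (cases "f a \<le> f b") (auto simp: abs_if)
  define k where "k = \<lceil>(f p - y) / (2 * pi)\<rceil>"
  have "(f p - y) / (2 * pi) \<le> k" "k < (f p - y) / (2 * pi) + 1"
    using ceiling_correct[of "(f p - y) / (2 * pi)"] by (simp_all add: k_def)
  then have "f p \<le> y + 2 * pi * k" "y + 2 * pi * k \<le> f q" using pq by (simp_all add: field_simps)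
  then have "y + 2 * pi * k \<in> range f" using continuous_on_UNIV_Icc_subset_range[OF assms(1), of p q] by auto
  then show thesis using that by (metis rangeE)
qed

lemma has_real_derivative_sign_change:
  fixes h :: "real \<Rightarrow> real"
  assumes "(h has_real_derivative D) (at s0)" and "D \<noteq> 0" and "h s0 = 0" and "\<delta> > 0"
  obtains s1 s2 where "\<bar>s1 - s0\<bar> < \<delta>" "\<bar>s2 - s0\<bar> < \<delta>" "0 < h s1" "h s2 < 0"
proof -
  have crossing: "\<exists>s1 s2. \<bar>s1 - s0\<bar> < \<delta> \<and> \<bar>s2 - s0\<bar> < \<delta> \<and> 0 < g s1 \<and> g s2 < 0"
    if g': "(g has_real_derivative E) (at s0)" and "0 < E" and "g s0 = 0" for g E
  proof -
    obtain e1 where "e1 > 0" and e1: "\<And>h. 0 < h \<Longrightarrow> h < e1 \<Longrightarrow> g s0 < g (s0 + h)"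
      using DERIV_pos_inc_right[OF g' \<open>0 < E\<close>] by blast
    obtain e2 where "e2 > 0" and e2: "\<And>h. 0 < h \<Longrightarrow> h < e2 \<Longrightarrow> g (s0 - h) < g s0"
      using DERIV_pos_inc_left[OF g' \<open>0 < E\<close>] by blast
    define r where "r = min \<delta> (min e1 e2) / 2"
    have "0 < r" "r < \<delta>" "r < e1" "r < e2" using \<open>\<delta> > 0\<close> \<open>e1 > 0\<close> \<open>e2 > 0\<close> by (auto simp: r_def)
    then show ?thesis using e1[of r] e2[of r] \<open>g s0 = 0\<close> by (intro exI[of _ "s0 + r"] exI[of _ "s0 - r"]) auto
  qed
  show thesis
  proof (cases "0 < D")
    case True
    then show thesis using crossing[OF assms(1)] assms(3) that by blast
  next
    case False
    then have "0 < - D" using assms(2) by simp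
    from crossing[OF DERIV_minus[OF assms(1)] this] assms(3) show thesis
      using that by auto
  qed
qed

lemma not_isCont_sgn_scaleR:
  fixes h :: "real \<Rightarrow> real" and N T :: "real \<Rightarrow> 'a::real_inner"
  assumes h': "(h has_real_derivative D) (at s0)" and "D \<noteq> 0" and "h s0 = 0"
    and N: "isCont N s0" "\<And>s. norm (N s) = 1"
    and T: "\<And>s. h s \<noteq> 0 \<Longrightarrow> T s = sgn (h s) *\<^sub>R N s"
  shows "\<not> isCont T s0"
proof
  assume "isCont T s0"
  define q where "q s = inner (T s) (N s)" for s
  have "isCont q s0" unfolding q_def using \<open>isCont T s0\<close> N(1) by (intro continuous_intros)
  then obtain \<delta> where "\<delta> > 0" and \<delta>: "\<And>s. \<bar>s - s0\<bar> < \<delta> \<Longrightarrow> \<bar>q s - q s0\<bar> < 1"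
    unfolding continuous_at_eps_delta dist_real_def by (meson zero_less_one)
  have q_sgn: "q s = sgn (h s)" if "h s \<noteq> 0" for s
    using N(2)[of s] by (simp add: q_def T[OF that] power2_norm_eq_inner[symmetric])
  obtain s1 s2 where "\<bar>s1 - s0\<bar> < \<delta>" "\<bar>s2 - s0\<bar> < \<delta>" "0 < h s1" "h s2 < 0"
    using has_real_derivative_sign_change[OF h' \<open>D \<noteq> 0\<close> \<open>h s0 = 0\<close> \<open>\<delta> > 0\<close>] .
  then show False using \<delta>[of s1] \<delta>[of s2] q_sgn[of s1] q_sgn[of s2] by auto
qed

section \<open>Functions whose derivative depends only on their value\<close>

lemma autonomous_increase_imp_deriv_nonneg_right:
  fixes f f' :: "real \<Rightarrow> real"
  assumes der: "\<And>x. (f has_real_derivative f' x) (at x)"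
    and dep: "\<And>x y. f x = f y \<Longrightarrow> f' x = f' y"
    and "a < b" and "f a < f b"
  shows "0 \<le> f' b"
proof (rule ccontr)
  assume "\<not> 0 \<le> f' b"
  have cont: "continuous_on {p..q} f" for p q
    using der by (meson DERIV_isCont continuous_at_imp_continuous_on)
  define S where "S = {t \<in> {a..b}. f t = f b}"
  define \<tau> where "\<tau> = Inf S"
  have "closed S" unfolding S_def by (rule continuous_closed_preimage_constant[OF cont]) simp
  moreover have "b \<in> S" "bdd_below S" using \<open>a < b\<close> by (auto simp: S_def intro: bdd_belowI[of _ a])
  ultimately have "\<tau> \<in> S" and \<tau>_least: "\<And>t. t \<in> S \<Longrightarrow> \<tau> \<le> t"
    unfolding \<tau>_def using closed_contains_Inf cInf_lower by blast+
  then have "a \<le> \<tau>" "f \<tau> = f b" by (simp_all add: S_def)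
  then have "a < \<tau>" using \<open>f a < f b\<close> by (cases "\<tau> = a") auto
  \<comment> \<open>\<open>\<tau>\<close> is the first time \<open>f\<close> reaches \<open>f b\<close>, so \<open>f\<close> stays below \<open>f b\<close> before \<open>\<tau>\<close>, yet \<open>f' \<tau> = f' b < 0\<close>.\<close>
  have below: "f t < f b" if t: "a \<le> t" "t < \<tau>" for t
  proof (rule ccontr)
    assume "\<not> f t < f b"
    then obtain z where "a \<le> z" "z \<le> t" "f z = f b"
      using IVT'[of f a "f b" t] \<open>f a < f b\<close> t cont by force
    then show False using \<tau>_least[of z] \<open>\<tau> \<in> S\<close> t by (auto simp: S_def)
  qed
  have "f' \<tau> < 0" using dep[of \<tau> b] \<open>\<tau> \<in> S\<close> \<open>\<not> 0 \<le> f' b\<close> by (auto simp: S_def)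
  then obtain e where "e > 0" and e: "\<And>h. 0 < h \<Longrightarrow> h < e \<Longrightarrow> f \<tau> < f (\<tau> - h)"
    using DERIV_neg_dec_left[OF der] by blast
  define h where "h = min e (\<tau> - a) / 2"
  have "0 < h" "h < e" "h \<le> \<tau> - a" using \<open>e > 0\<close> \<open>a < \<tau>\<close> by (auto simp: h_def)
  then have "f \<tau> < f (\<tau> - h)" "f (\<tau> - h) < f b" using e below[of "\<tau> - h"] by auto
  then show False using \<open>\<tau> \<in> S\<close> by (auto simp: S_def)
qed

lemma autonomous_increase_imp_deriv_nonneg:
  fixes f f' :: "real \<Rightarrow> real"
  assumes der: "\<And>x. (f has_real_derivative f' x) (at x)"
    and dep: "\<And>x y. f x = f y \<Longrightarrow> f' x = f' y"
    and "a < b" and "f a < f b"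
  shows "0 \<le> f' a" and "0 \<le> f' b"
proof -
  \<comment> \<open>The reflection \<open>g\<close> is again autonomous and exchanges the roles of \<open>a\<close> and \<open>b\<close>.\<close>
  define g where "g x = - f (- x)" for x
  have g_der: "(g has_real_derivative f' (- x)) (at x)" for x
  proof -
    have "((\<lambda>x. f (- x)) has_real_derivative f' (- x) * (- 1)) (at x)"
      by (rule DERIV_chain2[OF der DERIV_minus[OF DERIV_ident]])
    then show ?thesis unfolding g_def using DERIV_minus by fastforce
  qed
  have g_dep: "g x = g y \<Longrightarrow> f' (- x) = f' (- y)" for x y
    unfolding g_def by (rule dep) simp
  have "- b < - a" "g (- b) < g (- a)" using assms(3,4) by (simp_all add: g_def)
  from autonomous_increase_imp_deriv_nonneg_right[OF g_der g_dep this]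
  show "0 \<le> f' a" by simp
  show "0 \<le> f' b" by (rule autonomous_increase_imp_deriv_nonneg_right[OF der dep assms(3,4)])
qed

lemma autonomous_deriv_sign_constant:
  fixes f f' :: "real \<Rightarrow> real"
  assumes der: "\<And>x. (f has_real_derivative f' x) (at x)"
    and dep: "\<And>x y. f x = f y \<Longrightarrow> f' x = f' y"
  shows "(\<forall>x. 0 \<le> f' x) \<or> (\<forall>x. f' x \<le> 0)"
proof -
  have same_sign: "(0 \<le> f' x \<and> 0 \<le> f' y) \<or> (f' x \<le> 0 \<and> f' y \<le> 0)" if "x < y" for x y
  proof -
    consider "f x < f y" | "f y < f x" | "f x = f y" by linarith
    then show ?thesis
    proof cases
      case 1
      then show ?thesis using autonomous_increase_imp_deriv_nonneg[OF der dep that] by blast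
    next
      case 2
      have neg_der: "((\<lambda>x. - f x) has_real_derivative - f' x) (at x)" for x
        using DERIV_minus[OF der] .
      have neg_dep: "- f x = - f y \<Longrightarrow> - f' x = - f' y" for x y
        using dep[of x y] by simp
      have "- f x < - f y" using 2 by simp
      from autonomous_increase_imp_deriv_nonneg[OF neg_der neg_dep that this]
      show ?thesis by simp
    next
      case 3
      then show ?thesis using dep by (metis linear)
    qed
  qed
  show ?thesis
  proof (rule ccontr)
    assume "\<not> ?thesis"
    then obtain a b where "f' a < 0" "0 < f' b" by (auto simp: not_le)
    moreover have "a \<noteq> b" using calculation by auto
    ultimately show False using same_sign[of a b] same_sign[of b a] by linarith
  qed
qed

lemma mono_if_has_real_derivative_nonneg:
  fixes f f' :: "real \<Rightarrow> real"
  assumes "\<And>x. (f has_real_derivative f' x) (at x)" and "\<And>x. 0 \<le> f' x"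
  shows "mono f"
  by (rule monoI, rule deriv_nonneg_imp_mono) (use assms in auto)

lemma antimono_if_has_real_derivative_nonpos:
  fixes f f' :: "real \<Rightarrow> real"
  assumes "\<And>x. (f has_real_derivative f' x) (at x)" and "\<And>x. f' x \<le> 0"
  shows "antimono f"
  by (rule antimonoI, rule deriv_nonpos_imp_antimono) (use assms in auto)

section \<open>Unit vectors, angle lifts and the rotation index\<close>

lemma norm_unit_vec [simp]: "norm (unit_vec a) = 1"
  by (simp add: unit_vec_def norm_eq_sqrt_inner inner_vec_def sum_2 power2_eq_square[symmetric])

lemma unit_vec_neq_0 [simp]: "unit_vec a \<noteq> 0"
  using norm_unit_vec[of a] by (metis norm_zero zero_neq_one)

lemma continuous_on_unit_vec: "continuous_on UNIV unit_vec"
proof -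
  have eq: "unit_vec = (\<lambda>a. cos a *\<^sub>R vector [1, 0] + sin a *\<^sub>R vector [0, 1])"
    by (simp add: fun_eq_iff vec_eq_iff forall_2 unit_vec_def)
  show ?thesis unfolding eq by (intro continuous_intros)
qed

lemma unit_vec_plus_pi_half: "unit_vec (a + pi / 2) = vector [- sin a, cos a]"
  by (simp add: unit_vec_def sin_add cos_add)

lemma unit_vec_minus_pi_half: "unit_vec (a - pi / 2) = - unit_vec (a + pi / 2)"
  unfolding unit_vec_plus_pi_half by (simp add: unit_vec_def sin_diff cos_diff vec_eq_iff forall_2)

lemma unit_vec_diff:
  "(1 / 2) *\<^sub>R (unit_vec x - unit_vec y) = sin ((x - y) / 2) *\<^sub>R unit_vec ((x + y) / 2 + pi / 2)"
proof -
  have "sin ((y - x) / 2) = - sin ((x - y) / 2)" by (metis minus_diff_eq minus_divide_left sin_minus)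
  then show ?thesis unfolding unit_vec_plus_pi_half
    by (simp add: unit_vec_def vec_eq_iff forall_2 cos_diff_cos sin_diff_sin)
qed

lemma unit_vec_eqD:
  assumes "unit_vec x = unit_vec y"
  obtains m :: int where "x - y = 2 * pi * m"
proof -
  have "cos x = cos y" "sin x = sin y" using assms unfolding unit_vec_def
    by (metis vector_2(1), metis vector_2(2))
  then have "cos (x - y) = 1" by (simp add: cos_diff power2_eq_square[symmetric])
  then show thesis using that by (auto simp: cos_one_2pi_int)
qed

lemma unit_vec_lifts_differ_by_constant:
  fixes \<theta>1 \<theta>2 :: "real \<Rightarrow> real"
  assumes "continuous_on UNIV \<theta>1" "continuous_on UNIV \<theta>2"
    and "\<And>x. unit_vec (\<theta>1 x) = unit_vec (\<theta>2 x)"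
  shows "\<theta>1 x - \<theta>2 x = \<theta>1 y - \<theta>2 y"
proof -
  define g where "g x = (\<theta>1 x - \<theta>2 x) / (2 * pi)" for x
  have g_int: "g x \<in> \<int>" for x
  proof -
    obtain m :: int where "\<theta>1 x - \<theta>2 x = 2 * pi * m" using unit_vec_eqD[OF assms(3)] .
    then show ?thesis by (simp add: g_def)
  qed
  have "continuous_on UNIV g" unfolding g_def using assms(1,2) by (intro continuous_intros) auto
  then have "g x = g y" using g_int by (rule continuous_on_UNIV_Ints_constant)
  then show ?thesis by (simp add: g_def)
qed

lemma rotation_index_eqI:
  assumes "continuous_on UNIV \<theta>"
    and "\<And>x. (1 / norm (vector_derivative \<alpha> (at x))) *\<^sub>R vector_derivative \<alpha> (at x) = unit_vec (\<theta> x)"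
    and "\<theta> L - \<theta> 0 = 2 * pi * k"
  shows "rotation_index L \<alpha> = k"
  unfolding rotation_index_def
proof (rule the_equality)
  show "\<exists>\<theta>. continuous_on UNIV \<theta> \<and>
      (\<forall>x. (1 / norm (vector_derivative \<alpha> (at x))) *\<^sub>R vector_derivative \<alpha> (at x) = unit_vec (\<theta> x)) \<and>
      \<theta> L - \<theta> 0 = 2 * pi * k"
    using assms by blast
next
  fix j :: int
  assume "\<exists>\<theta>. continuous_on UNIV \<theta> \<and>
      (\<forall>x. (1 / norm (vector_derivative \<alpha> (at x))) *\<^sub>R vector_derivative \<alpha> (at x) = unit_vec (\<theta> x)) \<and>
      \<theta> L - \<theta> 0 = 2 * pi * j"
  then obtain \<theta>' where \<theta>': "continuous_on UNIV \<theta>'"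
      "\<And>x. (1 / norm (vector_derivative \<alpha> (at x))) *\<^sub>R vector_derivative \<alpha> (at x) = unit_vec (\<theta>' x)"
      "\<theta>' L - \<theta>' 0 = 2 * pi * j"
    by blast
  have "\<theta>' L - \<theta> L = \<theta>' 0 - \<theta> 0"
    by (rule unit_vec_lifts_differ_by_constant[OF \<theta>'(1) assms(1)]) (metis \<theta>'(2) assms(2))
  then have "2 * pi * j = 2 * pi * k" using assms(3) \<theta>'(3) by linarith
  then show "j = k" by simp
qed

lemma smooth_fun_has_vector_derivative:
  assumes "smooth_fun f"
  obtains f' where "\<And>x. (f has_vector_derivative f' x) (at x)"
  using assms unfolding smooth_fun_def by (metis One_nat_def)

lemma smooth_fun_has_real_derivative:
  fixes f :: "real \<Rightarrow> real"
  assumes "smooth_fun f"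
  obtains f' where "\<And>x. (f has_real_derivative f' x) (at x)"
  using smooth_fun_has_vector_derivative[OF assms] has_real_derivative_iff_has_vector_derivative by metis

lemma smooth_fun_continuous_on:
  assumes "smooth_fun f"
  shows "continuous_on UNIV f"
  using smooth_fun_has_vector_derivative[OF assms]
  by (metis continuous_at_imp_continuous_on has_vector_derivative_continuous)

lemma has_vector_derivative_argument_shift:
  fixes f :: "real \<Rightarrow> 'a::real_normed_vector"
  assumes "(f has_vector_derivative f') (at (x + c))"
  shows "((\<lambda>s. f (s + c)) has_vector_derivative f') (at x)"
proof -
  have "((\<lambda>s. s + c) has_vector_derivative 1) (at x)"
    using has_vector_derivative_add[OF has_vector_derivative_id has_vector_derivative_const] by simp
  from vector_diff_chain_at[OF this] assms show ?thesis by (simp add: o_def)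
qed

lemma periodic_with_has_vector_derivative:
  fixes f :: "real \<Rightarrow> 'a::real_normed_vector"
  assumes "periodic_with L f" and f': "\<And>x. (f has_vector_derivative f' x) (at x)"
  shows "f' (x + L) = f' x"
proof -
  have "(\<lambda>s. f (s + L)) = f" using assms(1) by (simp add: periodic_with_def fun_eq_iff)
  then have "(f has_vector_derivative f' (x + L)) (at x)"
    using has_vector_derivative_argument_shift[OF f'[of "x + L"]] by simp
  then show ?thesis using f' vector_derivative_unique_at by blast
qed

lemma oint_add:
  fixes \<beta> :: "real \<Rightarrow> real^2"
  assumes "continuous_on UNIV \<beta>"
  shows "oint a b \<beta> + oint b d \<beta> = oint a d \<beta>"
proof -
  have combine: "integral {x..y} \<beta> + integral {y..z} \<beta> = integral {x..z} \<beta>" if "x \<le> y" "y \<le> z" for x y z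
    using Henstock_Kurzweil_Integration.integral_combine[OF that integrable_continuous_real]
      continuous_on_subset[OF assms] by blast
  show ?thesis
    unfolding oint_def
    using combine[of a b d] combine[of a d b] combine[of d a b] combine[of b a d] combine[of b d a] combine[of d b a]
    by (cases "a \<le> b"; cases "b \<le> d"; cases "a \<le> d") (auto simp: algebra_simps)
qed

lemma has_vector_derivative_oint:
  fixes \<beta> :: "real \<Rightarrow> real^2"
  assumes \<beta>: "continuous_on UNIV \<beta>"
  shows "((\<lambda>z. oint c z \<beta>) has_vector_derivative \<beta> y) (at y)"
proof -
  have "((\<lambda>u. integral {y - 1..u} \<beta>) has_vector_derivative \<beta> y) (at y within {y - 1..y + 1})"
    by (rule integral_has_vector_derivative) (auto intro: continuous_on_subset[OF \<beta>])
  then have "((\<lambda>u. integral {y - 1..u} \<beta>) has_vector_derivative \<beta> y) (at y within {y - 1<..<y + 1})"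
    by (rule has_vector_derivative_within_subset) auto
  then have "((\<lambda>u. integral {y - 1..u} \<beta>) has_vector_derivative \<beta> y) (at y)"
    using has_vector_derivative_within_open[of y "{y - 1<..<y + 1}"] by auto
  then have "((\<lambda>u. oint c (y - 1) \<beta> + integral {y - 1..u} \<beta>) has_vector_derivative \<beta> y) (at y)"
    using has_vector_derivative_add[OF has_vector_derivative_const] by fastforce
  then show ?thesis
  proof (rule has_vector_derivative_transform_within_open[of _ _ _ "{y - 1<..<y + 1}"])
    fix u assume "u \<in> {y - 1<..<y + 1}"
    then show "oint c (y - 1) \<beta> + integral {y - 1..u} \<beta> = oint c u \<beta>"
      using oint_add[OF \<beta>, of c "y - 1" u] by (simp add: oint_def)
  qed auto
qed

lemma vector_derivative_gamma:
  fixes \<alpha> \<alpha>' \<beta> :: "real \<Rightarrow> real^2" and \<psi> \<psi>tilde :: "real \<Rightarrow> real"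
    and \<gamma> :: "real \<Rightarrow> real \<Rightarrow> real^2"
  assumes \<alpha>': "\<And>x. (\<alpha> has_vector_derivative \<alpha>' x) (at x)" and \<beta>: "continuous_on UNIV \<beta>"
    and a: "\<And>x. \<alpha>' x + \<beta> x = unit_vec (\<psi> x)"
    and b: "\<And>x. \<alpha>' x - \<beta> x = - unit_vec (\<psi>tilde x)"
    and \<gamma>: "\<And>t s. \<gamma> t s = (1/2) *\<^sub>R (\<alpha> (s + t) + \<alpha> (s - t)) + (1/2) *\<^sub>R oint (s - t) (s + t) \<beta>"
  shows "vector_derivative (\<gamma> t) (at s)
    = sin ((\<psi> (s + t) - \<psi>tilde (s - t)) / 2) *\<^sub>R unit_vec ((\<psi> (s + t) + \<psi>tilde (s - t)) / 2 + pi / 2)"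
proof -
  define P where "P z = oint 0 z \<beta>" for z
  have "oint (s - t) (s + t) \<beta> = P (s + t) - P (s - t)" for s
    using oint_add[OF \<beta>, of 0 "s - t" "s + t"] by (simp add: P_def algebra_simps)
  then have \<gamma>_eq: "\<gamma> t = (\<lambda>s. (1/2) *\<^sub>R (\<alpha> (s + t) + \<alpha> (s + - t) + (P (s + t) - P (s + - t))))"
    by (simp add: fun_eq_iff \<gamma> scaleR_right_distrib)
  have "((\<lambda>s. \<alpha> (s + t) + \<alpha> (s + - t) + (P (s + t) - P (s + - t))) has_vector_derivative
      \<alpha>' (s + t) + \<alpha>' (s + - t) + (\<beta> (s + t) - \<beta> (s + - t))) (at s)"
    unfolding P_def
    by (intro has_vector_derivative_add has_vector_derivative_diff has_vector_derivative_argument_shift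
        \<alpha>' has_vector_derivative_oint[OF \<beta>])
  from bounded_linear.has_vector_derivative[OF bounded_linear_scaleR_right this, of "1/2"]
  have "vector_derivative (\<gamma> t) (at s)
      = (1/2) *\<^sub>R ((\<alpha>' (s + t) + \<beta> (s + t)) + (\<alpha>' (s - t) - \<beta> (s - t)))"
    unfolding \<gamma>_eq by (simp add: vector_derivative_at algebra_simps)
  also have "\<dots> = (1/2) *\<^sub>R (unit_vec (\<psi> (s + t)) - unit_vec (\<psi>tilde (s - t)))"
    by (simp add: a b)
  finally show ?thesis by (simp add: unit_vec_diff)
qed

section \<open>The angle functions\<close>

lemma unit_tangent_lift:
  fixes A :: "real \<Rightarrow> real^2" and h \<sigma> :: "real \<Rightarrow> real"
  assumes A: "\<And>x. A x = h x *\<^sub>R unit_vec (\<sigma> x + pi / 2)"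
    and "\<And>x. h x \<noteq> 0" and "continuous_on UNIV h"
  obtains c where "\<And>x. (1 / norm (A x)) *\<^sub>R A x = unit_vec (\<sigma> x + c)"
proof -
  have unit: "(1 / norm (A x)) *\<^sub>R A x = sgn (h x) *\<^sub>R unit_vec (\<sigma> x + pi / 2)" for x
    by (simp add: A real_sgn_eq)
  from continuous_on_UNIV_nonzero_sign[OF assms(3,2)]
  consider "\<forall>x. 0 < h x" | "\<forall>x. h x < 0" by blast
  then show thesis
  proof cases
    case 1
    then show thesis using that[of "pi / 2"] unit by simp
  next
    case 2
    then show thesis using that[of "- (pi / 2)"] unit unit_vec_minus_pi_half by simp
  qed
qed

lemma winding_eq_rotation_index:
  fixes \<alpha> \<beta> :: "real \<Rightarrow> real^2" and \<psi> \<psi>tilde :: "real \<Rightarrow> real"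
  assumes a: "\<And>x. vector_derivative \<alpha> (at x) + \<beta> x = unit_vec (\<psi> x)"
    and b: "\<And>x. vector_derivative \<alpha> (at x) - \<beta> x = - unit_vec (\<psi>tilde x)"
    and nz: "\<And>x. vector_derivative \<alpha> (at x) \<noteq> 0"
    and cont: "continuous_on UNIV \<psi>" "continuous_on UNIV \<psi>tilde"
    and per: "vector_derivative \<alpha> (at L) = vector_derivative \<alpha> (at 0)" "\<beta> L = \<beta> 0"
  shows "\<psi> L - \<psi> 0 = 2 * pi * rotation_index L \<alpha>"
    and "\<psi>tilde L - \<psi>tilde 0 = 2 * pi * rotation_index L \<alpha>"
proof -
  define d \<sigma> where "d x = (\<psi> x - \<psi>tilde x) / 2" and "\<sigma> x = (\<psi> x + \<psi>tilde x) / 2" for x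
  have \<alpha>': "vector_derivative \<alpha> (at x) = sin (d x) *\<^sub>R unit_vec (\<sigma> x + pi / 2)" for x
  proof -
    have "vector_derivative \<alpha> (at x)
        = (1/2) *\<^sub>R ((vector_derivative \<alpha> (at x) + \<beta> x) + (vector_derivative \<alpha> (at x) - \<beta> x))"
      by (simp add: scaleR_right_distrib[symmetric])
    also have "\<dots> = (1/2) *\<^sub>R (unit_vec (\<psi> x) - unit_vec (\<psi>tilde x))" by (simp add: a b)
    finally show ?thesis by (simp add: unit_vec_diff d_def \<sigma>_def)
  qed
  have sin_d: "sin (d x) \<noteq> 0" for x using nz[of x] \<alpha>'[of x] by auto
  have cont_d: "continuous_on UNIV d" unfolding d_def using cont by (intro continuous_intros) auto
  have "continuous_on UNIV (\<lambda>x. sin (d x))" using cont_d by (intro continuous_intros)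
  then obtain c where tangent: "\<And>x. (1 / norm (vector_derivative \<alpha> (at x))) *\<^sub>R vector_derivative \<alpha> (at x)
      = unit_vec (\<sigma> x + c)"
    using unit_tangent_lift[of "\<lambda>x. vector_derivative \<alpha> (at x)" "\<lambda>x. sin (d x)", OF \<alpha>' sin_d] by blast
  obtain p1 :: int where p1: "\<psi> L - \<psi> 0 = 2 * pi * p1"
    using unit_vec_eqD[of "\<psi> L" "\<psi> 0"] a[of L] a[of 0] per by metis
  obtain p2 :: int where p2: "\<psi>tilde L - \<psi>tilde 0 = 2 * pi * p2"
    using unit_vec_eqD[of "\<psi>tilde L" "\<psi>tilde 0"] b[of L] b[of 0] per by (metis neg_equal_iff_equal)
  \<comment> \<open>\<open>d\<close> never meets a multiple of \<open>\<pi>\<close>, so it cannot change by \<open>\<pi> (p1 - p2)\<close> unless \<open>p1 = p2\<close>.\<close>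
  have "\<bar>d L - d 0\<bar> < pi" using continuous_on_UNIV_sin_nonzero_oscillation[OF cont_d sin_d] .
  moreover have "d L - d 0 = pi * (p1 - p2)" using p1 p2 by (simp add: d_def field_simps)
  ultimately have "\<bar>real_of_int (p1 - p2)\<bar> < 1" by (simp add: abs_mult)
  then have "p1 = p2" by linarith
  have lift_cont: "continuous_on UNIV (\<lambda>x. \<sigma> x + c)" unfolding \<sigma>_def using cont by (intro continuous_intros) auto
  have "(\<sigma> L + c) - (\<sigma> 0 + c) = 2 * pi * p1"
    using p1 p2 \<open>p1 = p2\<close> by (simp add: \<sigma>_def field_simps)
  then have "rotation_index L \<alpha> = p1"
    by (rule rotation_index_eqI[of "\<lambda>x. \<sigma> x + c", OF lift_cont tangent])
  then show "\<psi> L - \<psi> 0 = 2 * pi * rotation_index L \<alpha>" "\<psi>tilde L - \<psi>tilde 0 = 2 * pi * rotation_index L \<alpha>"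
    using p1 p2 \<open>p1 = p2\<close> by simp_all
qed

lemma has_real_derivative_sin_half_difference:
  fixes \<psi> \<psi>tilde \<psi>' \<psi>tilde' :: "real \<Rightarrow> real"
  assumes \<psi>': "\<And>x. (\<psi> has_real_derivative \<psi>' x) (at x)"
    and \<psi>tilde': "\<And>x. (\<psi>tilde has_real_derivative \<psi>tilde' x) (at x)"
  shows "((\<lambda>s. sin ((\<psi> (s + t) - \<psi>tilde (s - t)) / 2)) has_real_derivative
      cos ((\<psi> (s + t) - \<psi>tilde (s - t)) / 2) * ((\<psi>' (s + t) - \<psi>tilde' (s - t)) / 2)) (at s)"
proof -
  have "((\<lambda>s. \<psi> (s + t)) has_real_derivative \<psi>' (s + t)) (at s)"
    "((\<lambda>s. \<psi>tilde (s + - t)) has_real_derivative \<psi>tilde' (s + - t)) (at s)"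
    using \<psi>' \<psi>tilde' DERIV_shift by blast+
  from DERIV_fun_sin[OF DERIV_cdivide[OF DERIV_diff[OF this]], of 2] show ?thesis by simp
qed

lemma derivatives_match_if_unit_tangent_continuous:
  fixes \<psi> \<psi>tilde \<psi>' \<psi>tilde' :: "real \<Rightarrow> real" and \<gamma> :: "real \<Rightarrow> real \<Rightarrow> real^2"
  assumes \<psi>': "\<And>x. (\<psi> has_real_derivative \<psi>' x) (at x)"
    and \<psi>tilde': "\<And>x. (\<psi>tilde has_real_derivative \<psi>tilde' x) (at x)"
    and \<gamma>': "\<And>t s. vector_derivative (\<gamma> t) (at s)
      = sin ((\<psi> (s + t) - \<psi>tilde (s - t)) / 2) *\<^sub>R unit_vec ((\<psi> (s + t) + \<psi>tilde (s - t)) / 2 + pi / 2)"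
    and tangent_cont: "\<forall>t. \<exists>T :: real \<Rightarrow> real^2. continuous_on UNIV T \<and>
      (\<forall>s. vector_derivative (\<gamma> t) (at s) \<noteq> 0 \<longrightarrow>
        T s = (1 / norm (vector_derivative (\<gamma> t) (at s))) *\<^sub>R vector_derivative (\<gamma> t) (at s))"
    and k: "\<psi> u = \<psi>tilde v + 2 * pi * of_int k"
  shows "\<psi>' u = \<psi>tilde' v"
proof (rule ccontr)
  assume "\<psi>' u \<noteq> \<psi>tilde' v"
  \<comment> \<open>On the curve \<open>\<gamma> t\<close> with \<open>t = (u - v) / 2\<close>, the speed \<open>h\<close> has a simple zero at \<open>s0 = (u + v) / 2\<close>.\<close>
  define t s0 where "t = (u - v) / 2" and "s0 = (u + v) / 2"
  have uv: "s0 + t = u" "s0 - t = v" by (simp_all add: t_def s0_def field_simps)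
  define \<phi> where "\<phi> s = (\<psi> (s + t) - \<psi>tilde (s - t)) / 2" for s
  define h N where "h s = sin (\<phi> s)" and "N s = unit_vec ((\<psi> (s + t) + \<psi>tilde (s - t)) / 2 + pi / 2)" for s
  obtain T where "continuous_on UNIV T" and T: "\<And>s. vector_derivative (\<gamma> t) (at s) \<noteq> 0 \<Longrightarrow>
      T s = (1 / norm (vector_derivative (\<gamma> t) (at s))) *\<^sub>R vector_derivative (\<gamma> t) (at s)"
    using tangent_cont by blast
  have \<gamma>'_hN: "vector_derivative (\<gamma> t) (at s) = h s *\<^sub>R N s" for s by (simp add: \<gamma>' h_def N_def \<phi>_def)
  have "\<phi> s0 = of_int k * pi" using k by (simp add: \<phi>_def uv)
  then have "sin (\<phi> s0) = 0" using sin_zero_iff_int2 by blast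
  then have "h s0 = 0" and "cos (\<phi> s0) \<noteq> 0"
    using sin_cos_squared_add[of "\<phi> s0"] by (auto simp: h_def)
  have h': "(h has_real_derivative cos (\<phi> s0) * ((\<psi>' u - \<psi>tilde' v) / 2)) (at s0)"
    using has_real_derivative_sin_half_difference[OF \<psi>' \<psi>tilde', of t s0]
    by (simp add: h_def[abs_def] \<phi>_def uv)
  have cont: "continuous_on UNIV \<psi>" "continuous_on UNIV \<psi>tilde"
    using \<psi>' \<psi>tilde' by (meson DERIV_isCont continuous_at_imp_continuous_on)+
  then have "continuous_on UNIV (\<lambda>s. (\<psi> (s + t) + \<psi>tilde (s - t)) / 2 + pi / 2)"
    by (intro continuous_intros continuous_on_compose2[OF cont(1)] continuous_on_compose2[OF cont(2)]) auto
  then have "continuous_on UNIV N" unfolding N_def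
    by (rule continuous_on_compose2[OF continuous_on_unit_vec]) auto
  then have "isCont N s0" by (simp add: continuous_on_eq_continuous_at)
  have "T s = sgn (h s) *\<^sub>R N s" if "h s \<noteq> 0" for s
  proof -
    have "vector_derivative (\<gamma> t) (at s) \<noteq> 0" using that by (simp add: \<gamma>'_hN N_def)
    then show ?thesis using T by (simp add: \<gamma>'_hN N_def real_sgn_eq)
  qed
  moreover have "cos (\<phi> s0) * ((\<psi>' u - \<psi>tilde' v) / 2) \<noteq> 0"
    using \<open>cos (\<phi> s0) \<noteq> 0\<close> \<open>\<psi>' u \<noteq> \<psi>tilde' v\<close> by simp
  moreover have "norm (N s) = 1" for s by (simp add: N_def)
  ultimately have "\<not> isCont T s0"
    using not_isCont_sgn_scaleR[OF h' _ \<open>h s0 = 0\<close> \<open>isCont N s0\<close>] by blast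
  then show False using \<open>continuous_on UNIV T\<close> by (simp add: continuous_on_eq_continuous_at)
qed

lemma mono_if_derivatives_match_mod_2pi:
  fixes \<psi> \<psi>tilde \<psi>' \<psi>tilde' :: "real \<Rightarrow> real"
  assumes \<psi>': "\<And>x. (\<psi> has_real_derivative \<psi>' x) (at x)"
    and \<psi>tilde': "\<And>x. (\<psi>tilde has_real_derivative \<psi>tilde' x) (at x)"
    and match: "\<And>u v k. \<psi> u = \<psi>tilde v + 2 * pi * of_int k \<Longrightarrow> \<psi>' u = \<psi>tilde' v"
    and wind: "2 * pi \<le> \<bar>\<psi> L - \<psi> 0\<bar>" "2 * pi \<le> \<bar>\<psi>tilde L - \<psi>tilde 0\<bar>"
  shows "(mono \<psi> \<and> mono \<psi>tilde) \<or> (antimono \<psi> \<and> antimono \<psi>tilde)"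
proof -
  have cont: "continuous_on UNIV \<psi>" "continuous_on UNIV \<psi>tilde"
    using \<psi>' \<psi>tilde' by (auto intro: DERIV_continuous_on)
  have dep: "\<psi>' x = \<psi>' y" if "\<psi> x = \<psi> y" for x y
  proof -
    obtain v and k :: int where "\<psi>tilde v = \<psi> x + 2 * pi * k"
      using continuous_on_UNIV_meets_every_class_mod_2pi[OF cont(2) wind(2)] .
    then have "\<psi> x = \<psi>tilde v + 2 * pi * of_int (- k)" "\<psi> y = \<psi>tilde v + 2 * pi * of_int (- k)"
      using that by simp_all
    then show ?thesis using match by metis
  qed
  have \<psi>tilde'_range: "\<exists>u. \<psi>tilde' v = \<psi>' u" for v
  proof -
    obtain u and k :: int where "\<psi> u = \<psi>tilde v + 2 * pi * k"
      using continuous_on_UNIV_meets_every_class_mod_2pi[OF cont(1) wind(1)] .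
    then show ?thesis using match by metis
  qed
  from autonomous_deriv_sign_constant[OF \<psi>' dep] show ?thesis
  proof
    assume "\<forall>x. 0 \<le> \<psi>' x"
    then have "0 \<le> \<psi>tilde' x" for x using \<psi>tilde'_range by metis
    with \<open>\<forall>x. 0 \<le> \<psi>' x\<close> show ?thesis
      using mono_if_has_real_derivative_nonneg[OF \<psi>'] mono_if_has_real_derivative_nonneg[OF \<psi>tilde'] by blast
  next
    assume "\<forall>x. \<psi>' x \<le> 0"
    then have "\<psi>tilde' x \<le> 0" for x using \<psi>tilde'_range by metis
    with \<open>\<forall>x. \<psi>' x \<le> 0\<close> show ?thesis
      using antimono_if_has_real_derivative_nonpos[OF \<psi>'] antimono_if_has_real_derivative_nonpos[OF \<psi>tilde'] by blast
  qed
qed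

theorem corollary2p8:
  fixes L :: real and \<alpha> \<beta> :: "real \<Rightarrow> real^2" and \<psi> \<psi>tilde :: "real \<Rightarrow> real"
    and \<gamma> :: "real \<Rightarrow> real \<Rightarrow> real^2"
  assumes L_pos: "L > 0"
    and smooth_\<alpha>: "smooth_fun \<alpha>" and smooth_\<beta>: "smooth_fun \<beta>"
    and per_\<alpha>: "periodic_with L \<alpha>" and per_\<beta>: "periodic_with L \<beta>"
    and \<alpha>'_nz: "\<forall>x. vector_derivative \<alpha> (at x) \<noteq> 0"
    and orth: "\<forall>x. inner (\<beta> x) (vector_derivative \<alpha> (at x)) = 0"
    and norm1: "\<forall>x. (norm (vector_derivative \<alpha> (at x)))\<^sup>2 + (norm (\<beta> x))\<^sup>2 = 1"
    and \<gamma>_def: "\<forall>t s. \<gamma> t s = (1/2) *\<^sub>R (\<alpha> (s + t) + \<alpha> (s - t)) + (1/2) *\<^sub>R oint (s - t) (s + t) \<beta>"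
    and smooth_\<psi>: "smooth_fun \<psi>" and smooth_\<psi>tilde: "smooth_fun \<psi>tilde"
    and a_eq: "\<forall>x. vector_derivative \<alpha> (at x) + \<beta> x = unit_vec (\<psi> x)"
    and b_eq: "\<forall>x. vector_derivative \<alpha> (at x) - \<beta> x = - unit_vec (\<psi>tilde x)"
    and rot: "rotation_index L \<alpha> \<noteq> 0"
    and curv_finite: "\<forall>t s0. \<exists>e>0. \<exists>M. \<forall>s. \<bar>s - s0\<bar> < e \<and> vector_derivative (\<gamma> t) (at s) \<noteq> 0
                         \<longrightarrow> \<bar>curvature (\<gamma> t) s\<bar> \<le> M"
    and tangent_cont: "\<forall>t. \<exists>T :: real \<Rightarrow> real^2. continuous_on UNIV T \<and>
                         (\<forall>s. vector_derivative (\<gamma> t) (at s) \<noteq> 0 \<longrightarrow>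
                            T s = (1 / norm (vector_derivative (\<gamma> t) (at s))) *\<^sub>R vector_derivative (\<gamma> t) (at s))"
  shows "(mono \<psi> \<and> mono \<psi>tilde) \<or> (antimono \<psi> \<and> antimono \<psi>tilde)"
proof -
  obtain \<alpha>' where \<alpha>': "\<And>x. (\<alpha> has_vector_derivative \<alpha>' x) (at x)"
    using smooth_fun_has_vector_derivative[OF smooth_\<alpha>] by blast
  obtain \<psi>' where \<psi>': "\<And>x. (\<psi> has_real_derivative \<psi>' x) (at x)"
    using smooth_fun_has_real_derivative[OF smooth_\<psi>] by blast
  obtain \<psi>tilde' where \<psi>tilde': "\<And>x. (\<psi>tilde has_real_derivative \<psi>tilde' x) (at x)"
    using smooth_fun_has_real_derivative[OF smooth_\<psi>tilde] by blast
  have \<alpha>'_eq: "vector_derivative \<alpha> (at x) = \<alpha>' x" for x using \<alpha>' by (rule vector_derivative_at)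
  have "\<alpha>' x + \<beta> x = unit_vec (\<psi> x)" "\<alpha>' x - \<beta> x = - unit_vec (\<psi>tilde x)" for x
    using a_eq b_eq by (simp_all add: \<alpha>'_eq)
  from vector_derivative_gamma[OF \<alpha>' smooth_fun_continuous_on[OF smooth_\<beta>] this] \<gamma>_def
  have \<gamma>': "vector_derivative (\<gamma> t) (at s) = sin ((\<psi> (s + t) - \<psi>tilde (s - t)) / 2) *\<^sub>R
      unit_vec ((\<psi> (s + t) + \<psi>tilde (s - t)) / 2 + pi / 2)" for t s
    by blast
  have match: "\<And>u v (k :: int). \<psi> u = \<psi>tilde v + 2 * pi * of_int k \<Longrightarrow> \<psi>' u = \<psi>tilde' v"
    using derivatives_match_if_unit_tangent_continuous[OF \<psi>' \<psi>tilde' \<gamma>' tangent_cont] by blast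
  have cont: "continuous_on UNIV \<psi>" "continuous_on UNIV \<psi>tilde"
    using smooth_\<psi> smooth_\<psi>tilde by (simp_all add: smooth_fun_continuous_on)
  have "vector_derivative \<alpha> (at L) = vector_derivative \<alpha> (at 0)" "\<beta> L = \<beta> 0"
    using periodic_with_has_vector_derivative[OF per_\<alpha> \<alpha>', of 0] per_\<beta>[unfolded periodic_with_def, rule_format, of 0]
    by (simp_all add: \<alpha>'_eq)
  note winding = winding_eq_rotation_index[OF a_eq[rule_format] b_eq[rule_format] \<alpha>'_nz[rule_format] cont this]
  have "2 * pi \<le> \<bar>\<psi> L - \<psi> 0\<bar>" "2 * pi \<le> \<bar>\<psi>tilde L - \<psi>tilde 0\<bar>"
    unfolding winding using rot by (simp_all add: abs_mult)
  then show ?thesis using mono_if_derivatives_match_mod_2pi[OF \<psi>' \<psi>tilde'] match by blast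
qed

end
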